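(* In the setup of the context, let $J$ be the $F$-vector space with basis $(t_x)_{x\in B}$ and bilinear multiplication $t_xt_y:=\sum_{z\in B}\gamma_{x,y,z}t_{z^\ast}$. Then: (a) $J$ is an associative $F$-algebra with identity element $1_J=\sum_{d\in\mathcal D}n_dt_d$, where $\mathcal D:=\{x\in B\mid n_x\neq0\}$; (b) the $F$-linear map $\bar\tau:J\to F$, $\bar\tau(t_x):=n_x$, is a trace form making $J$ a symmetric $F$-algebra; (c) the $F$-linear map $t_x\mapsto t_x^\ast:=t_{x^\ast}$ is an antiautomorphism of $J$, and $(t_x)_{x\in B}$ is a $\ast$-symmetric basis of $J$ with respect to $\bar\tau$, i.e. $\bar\tau(t_{x^\ast}t_y)=\delta_{xy}$... more precisely $\bar\tau(t_xt_y^\ast)=\delta_{xy}$ for all $x,y\in B$.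
   Context: Setup: $\Gamma$ totally ordered abelian group; $K$ field with surjective valuation $\nu$, valuation ring $\mathcal O$, maximal ideal $\mathfrak m$, formally real residue field $F$. $H$ finite-dimensional split semisimple symmetric $K$-algebra with trace form $\tau$, $K$-linear involutive antiautomorphism $\ast$, $\ast$-symmetric basis $B$ ($B^\ast=B$, $\tau(bc^\ast)=\delta_{bc}$). Simple modules indexed by $\Lambda$, characters $\chi_\lambda$, Schur elements $c_\lambda$ with $\tau=\sum c_\lambda^{-1}\chi_\lambda$, $a_\lambda=-\tfrac12\nu(c_\lambda)\in\Gamma$. Fix a homomorphism $\langle a_\lambda\rangle\to K^\times$, $\gamma\mapsto v^\gamma$, with $\nu(v^\gamma)=\gamma$, and put $f_\lambda:=v^{2a_\lambda}c_\lambda\in\mathcal O^\times$. For each $\lambda$ choose a balanced matrix representation $\rho_\lambda$ of type $\lambda$ (irreducible with $\nu(\rho_\lambda(b))\ge-a_\lambda$ for all $b$ in every $\ast$-symmetric basis) and set $c^\lambda(x):=v^{a_\lambda}\rho_\lambda(x)\bmod\mathfrak m$. Define $\gamma_{x,y,z}:=\sum_\lambda\sum_{\mathfrak{s,t,u}}f_\lambda^{-1}c^\lambda(x)_{\mathfrak{st}}c^\lambda(y)_{\mathfrak{tu}}c^\lambda(z)_{\mathfrak{us}}$ and $n_x:=\sum_\lambda\sum_{\mathfrak s}f_\lambda^{-1}c^\lambda(x^\ast)_{\mathfrak{ss}}$ (elements of $F$). *)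

theory Defs
  imports Complex_Main
begin

text \<open>A valuation is modelled as a map nu : K -> Gamma whose values are only meaningful
  on nonzero elements (nu(0) = infinity is handled by the predicate val_ge).\<close>

definition val_ge :: "('k::zero \<Rightarrow> 'g::linorder) \<Rightarrow> 'g \<Rightarrow> 'k \<Rightarrow> bool" where
  "val_ge \<nu> \<gamma> x \<longleftrightarrow> x = 0 \<or> \<gamma> \<le> \<nu> x"

definition surj_valuation :: "('k::field \<Rightarrow> 'g::linordered_ab_group_add) \<Rightarrow> bool" where
  "surj_valuation \<nu> \<longleftrightarrow>
     (\<forall>x y. x \<noteq> 0 \<longrightarrow> y \<noteq> 0 \<longrightarrow> \<nu> (x * y) = \<nu> x + \<nu> y) \<and>
     (\<forall>x y. x \<noteq> 0 \<longrightarrow> y \<noteq> 0 \<longrightarrow> x + y \<noteq> 0 \<longrightarrow> min (\<nu> x) (\<nu> y) \<le> \<nu> (x + y)) \<and>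
     (\<forall>\<gamma>. \<exists>x. x \<noteq> 0 \<and> \<nu> x = \<gamma>)"

definition val_ring :: "('k::field \<Rightarrow> 'g::linordered_ab_group_add) \<Rightarrow> 'k set" where
  "val_ring \<nu> = {x. val_ge \<nu> 0 x}"

definition val_max :: "('k::field \<Rightarrow> 'g::linordered_ab_group_add) \<Rightarrow> 'k set" where
  "val_max \<nu> = {x. x = 0 \<or> 0 < \<nu> x}"

text \<open>red : O -> F is a surjective ring homomorphism with kernel m, i.e. F = O/m
  (values of red outside O are irrelevant).\<close>
definition residue_map :: "('k::field \<Rightarrow> 'g::linordered_ab_group_add) \<Rightarrow> ('k \<Rightarrow> 'f::field) \<Rightarrow> bool" where
  "residue_map \<nu> red \<longleftrightarrow>
     (\<forall>x\<in>val_ring \<nu>. \<forall>y\<in>val_ring \<nu>. red (x + y) = red x + red y \<and> red (x * y) = red x * red y) \<and>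
     red 1 = 1 \<and>
     red ` val_ring \<nu> = UNIV \<and>
     (\<forall>x\<in>val_ring \<nu>. red x = 0 \<longleftrightarrow> x \<in> val_max \<nu>)"

definition formally_real :: "'f::field itself \<Rightarrow> bool" where
  "formally_real _ \<longleftrightarrow> (\<forall>xs :: 'f list. sum_list (map (\<lambda>x. x ^ 2) xs) \<noteq> - 1)"

definition K_algebra :: "('k::field \<Rightarrow> 'h::ring_1 \<Rightarrow> 'h) \<Rightarrow> bool" where
  "K_algebra scale \<longleftrightarrow> vector_space scale \<and>
     (\<forall>c x y. scale c (x * y) = scale c x * y \<and> scale c (x * y) = x * scale c y)"

definition is_basis :: "('k::field \<Rightarrow> 'h::ring_1 \<Rightarrow> 'h) \<Rightarrow> 'h set \<Rightarrow> bool" where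
  "is_basis scale B \<longleftrightarrow> finite B \<and> \<not> module.dependent scale B \<and> module.span scale B = UNIV"

definition symmetrizing_trace :: "('k::field \<Rightarrow> 'h::ring_1 \<Rightarrow> 'h) \<Rightarrow> ('h \<Rightarrow> 'k) \<Rightarrow> bool" where
  "symmetrizing_trace scale \<tau> \<longleftrightarrow>
     (\<forall>x y. \<tau> (x + y) = \<tau> x + \<tau> y) \<and> (\<forall>c x. \<tau> (scale c x) = c * \<tau> x) \<and>
     (\<forall>x y. \<tau> (x * y) = \<tau> (y * x)) \<and>
     (\<forall>x. (\<forall>y. \<tau> (x * y) = 0) \<longrightarrow> x = 0)"

definition involutive_antiauto :: "('k::field \<Rightarrow> 'h::ring_1 \<Rightarrow> 'h) \<Rightarrow> ('h \<Rightarrow> 'h) \<Rightarrow> bool" where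
  "involutive_antiauto scale star \<longleftrightarrow>
     (\<forall>x y. star (x + y) = star x + star y) \<and> (\<forall>c x. star (scale c x) = scale c (star x)) \<and>
     (\<forall>x y. star (x * y) = star y * star x) \<and> (\<forall>x. star (star x) = x)"

definition star_sym_basis ::
  "('k::field \<Rightarrow> 'h::ring_1 \<Rightarrow> 'h) \<Rightarrow> ('h \<Rightarrow> 'k) \<Rightarrow> ('h \<Rightarrow> 'h) \<Rightarrow> 'h set \<Rightarrow> bool" where
  "star_sym_basis scale \<tau> star B \<longleftrightarrow> is_basis scale B \<and> star ` B = B \<and>
     (\<forall>b\<in>B. \<forall>c\<in>B. \<tau> (b * star c) = (if b = c then 1 else 0))"

text \<open>A d x d matrix over K is a function nat => nat => K, only entries with indices < d matter.\<close>
definition matrix_rep :: "('k::field \<Rightarrow> 'h::ring_1 \<Rightarrow> 'h) \<Rightarrow> nat \<Rightarrow> ('h \<Rightarrow> nat \<Rightarrow> nat \<Rightarrow> 'k) \<Rightarrow> bool" where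
  "matrix_rep scale d \<rho> \<longleftrightarrow>
     (\<forall>x y i j. i < d \<longrightarrow> j < d \<longrightarrow> \<rho> (x + y) i j = \<rho> x i j + \<rho> y i j) \<and>
     (\<forall>c x i j. i < d \<longrightarrow> j < d \<longrightarrow> \<rho> (scale c x) i j = c * \<rho> x i j) \<and>
     (\<forall>x y i j. i < d \<longrightarrow> j < d \<longrightarrow> \<rho> (x * y) i j = (\<Sum>k<d. \<rho> x i k * \<rho> y k j)) \<and>
     (\<forall>i j. i < d \<longrightarrow> j < d \<longrightarrow> \<rho> 1 i j = (if i = j then 1 else 0))"

text \<open>Split semisimplicity, with the rho_lambda (lambda in Lambda) a complete set of pairwise
  non-isomorphic (absolutely) irreducible representations, is expressed through the
  Wedderburn isomorphism H ~= prod_lambda M_{d_lambda}(K), h |-> (rho_lambda(h))_lambda.\<close>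
definition wedderburn ::
  "('k::field \<Rightarrow> 'h::ring_1 \<Rightarrow> 'h) \<Rightarrow> 'l set \<Rightarrow> ('l \<Rightarrow> nat) \<Rightarrow> ('l \<Rightarrow> 'h \<Rightarrow> nat \<Rightarrow> nat \<Rightarrow> 'k) \<Rightarrow> bool" where
  "wedderburn scale \<Lambda> d \<rho> \<longleftrightarrow> finite \<Lambda> \<and>
     (\<forall>lam\<in>\<Lambda>. 0 < d lam \<and> matrix_rep scale (d lam) (\<rho> lam)) \<and>
     (\<forall>x y. (\<forall>lam\<in>\<Lambda>. \<forall>i<d lam. \<forall>j<d lam. \<rho> lam x i j = \<rho> lam y i j) \<longrightarrow> x = y) \<and>
     (\<forall>M :: 'l \<Rightarrow> nat \<Rightarrow> nat \<Rightarrow> 'k. \<exists>x. \<forall>lam\<in>\<Lambda>. \<forall>i<d lam. \<forall>j<d lam. \<rho> lam x i j = M lam i j)"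

definition character :: "nat \<Rightarrow> ('h \<Rightarrow> nat \<Rightarrow> nat \<Rightarrow> 'k::field) \<Rightarrow> 'h \<Rightarrow> 'k" where
  "character d \<rho> x = (\<Sum>i<d. \<rho> x i i)"

definition balanced ::
  "('k::field \<Rightarrow> 'h::ring_1 \<Rightarrow> 'h) \<Rightarrow> ('h \<Rightarrow> 'k) \<Rightarrow> ('h \<Rightarrow> 'h) \<Rightarrow> ('k \<Rightarrow> 'g::linordered_ab_group_add)
    \<Rightarrow> 'g \<Rightarrow> nat \<Rightarrow> ('h \<Rightarrow> nat \<Rightarrow> nat \<Rightarrow> 'k) \<Rightarrow> bool" where
  "balanced scale \<tau> star \<nu> a d \<rho> \<longleftrightarrow>
     (\<forall>B'. star_sym_basis scale \<tau> star B' \<longrightarrow>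
        (\<forall>b\<in>B'. \<forall>i<d. \<forall>j<d. val_ge \<nu> (- a) (\<rho> b i j)))"

inductive_set gen_subgroup :: "'g::ab_group_add set \<Rightarrow> 'g set" for A where
  zero: "0 \<in> gen_subgroup A"
| gen: "x \<in> A \<Longrightarrow> x \<in> gen_subgroup A"
| add: "x \<in> gen_subgroup A \<Longrightarrow> y \<in> gen_subgroup A \<Longrightarrow> x + y \<in> gen_subgroup A"
| neg: "x \<in> gen_subgroup A \<Longrightarrow> - x \<in> gen_subgroup A"

definition vpow_hom :: "('k::field \<Rightarrow> 'g::linordered_ab_group_add) \<Rightarrow> 'g set \<Rightarrow> ('g \<Rightarrow> 'k) \<Rightarrow> bool" where
  "vpow_hom \<nu> G vp \<longleftrightarrow>
     (\<forall>\<gamma>\<in>G. vp \<gamma> \<noteq> 0 \<and> \<nu> (vp \<gamma>) = \<gamma>) \<and>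
     (\<forall>\<gamma>\<in>G. \<forall>\<delta>\<in>G. vp (\<gamma> + \<delta>) = vp \<gamma> * vp \<delta>)"

definition cmat :: "('k \<Rightarrow> 'f) \<Rightarrow> ('g \<Rightarrow> 'k::field) \<Rightarrow> ('l \<Rightarrow> 'g)
    \<Rightarrow> ('l \<Rightarrow> 'h \<Rightarrow> nat \<Rightarrow> nat \<Rightarrow> 'k) \<Rightarrow> 'l \<Rightarrow> 'h \<Rightarrow> nat \<Rightarrow> nat \<Rightarrow> 'f" where
  "cmat red vp a \<rho> lam x i j = red (vp (a lam) * \<rho> lam x i j)"

definition fres :: "('k \<Rightarrow> 'f) \<Rightarrow> ('g::ab_group_add \<Rightarrow> 'k::field) \<Rightarrow> ('l \<Rightarrow> 'g) \<Rightarrow> ('l \<Rightarrow> 'k) \<Rightarrow> 'l \<Rightarrow> 'f" where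
  "fres red vp a c lam = red (vp (a lam + a lam) * c lam)"

definition gam :: "'l set \<Rightarrow> ('l \<Rightarrow> nat) \<Rightarrow> ('k \<Rightarrow> 'f::field) \<Rightarrow> ('g::ab_group_add \<Rightarrow> 'k::field)
    \<Rightarrow> ('l \<Rightarrow> 'g) \<Rightarrow> ('l \<Rightarrow> 'k) \<Rightarrow> ('l \<Rightarrow> 'h \<Rightarrow> nat \<Rightarrow> nat \<Rightarrow> 'k) \<Rightarrow> 'h \<Rightarrow> 'h \<Rightarrow> 'h \<Rightarrow> 'f" where
  "gam \<Lambda> d red vp a c \<rho> x y z =
     (\<Sum>lam\<in>\<Lambda>. \<Sum>s<d lam. \<Sum>t<d lam. \<Sum>u<d lam.
        inverse (fres red vp a c lam) * cmat red vp a \<rho> lam x s t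
          * cmat red vp a \<rho> lam y t u * cmat red vp a \<rho> lam z u s)"

definition nconst :: "'l set \<Rightarrow> ('l \<Rightarrow> nat) \<Rightarrow> ('k \<Rightarrow> 'f::field) \<Rightarrow> ('g::ab_group_add \<Rightarrow> 'k::field)
    \<Rightarrow> ('l \<Rightarrow> 'g) \<Rightarrow> ('l \<Rightarrow> 'k) \<Rightarrow> ('l \<Rightarrow> 'h \<Rightarrow> nat \<Rightarrow> nat \<Rightarrow> 'k) \<Rightarrow> ('h \<Rightarrow> 'h) \<Rightarrow> 'h \<Rightarrow> 'f" where
  "nconst \<Lambda> d red vp a c \<rho> star x =
     (\<Sum>lam\<in>\<Lambda>. \<Sum>s<d lam. inverse (fres red vp a c lam) * cmat red vp a \<rho> lam (star x) s s)"

text \<open>J is the F-vector space with basis (t_x)_{x in B}; an element sum_x j_x t_x is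
  represented by its coefficient function j, which vanishes outside B.\<close>

definition Jcar :: "'h set \<Rightarrow> ('h \<Rightarrow> 'f::field) set" where
  "Jcar B = {j. \<forall>w. w \<notin> B \<longrightarrow> j w = 0}"

definition Jt :: "'h \<Rightarrow> 'h \<Rightarrow> 'f::field" where
  "Jt x = (\<lambda>w. if w = x then 1 else 0)"

text \<open>Bilinear extension of t_x t_y = sum_z G x y z t_{z*}: the coefficient of t_w is
  sum_{x,y} j_x j'_y G x y (w*).\<close>
definition Jmult :: "'h set \<Rightarrow> ('h \<Rightarrow> 'h) \<Rightarrow> ('h \<Rightarrow> 'h \<Rightarrow> 'h \<Rightarrow> 'f::field)
    \<Rightarrow> ('h \<Rightarrow> 'f) \<Rightarrow> ('h \<Rightarrow> 'f) \<Rightarrow> ('h \<Rightarrow> 'f)" where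
  "Jmult B star G j j' =
     (\<lambda>w. if w \<in> B then (\<Sum>x\<in>B. \<Sum>y\<in>B. j x * j' y * G x y (star w)) else 0)"

definition Jone :: "'h set \<Rightarrow> ('h \<Rightarrow> 'f::field) \<Rightarrow> ('h \<Rightarrow> 'f)" where
  "Jone B n = (\<lambda>w. if w \<in> {x \<in> B. n x \<noteq> 0} then n w else 0)"

definition Jtrace :: "'h set \<Rightarrow> ('h \<Rightarrow> 'f::field) \<Rightarrow> ('h \<Rightarrow> 'f) \<Rightarrow> 'f" where
  "Jtrace B n j = (\<Sum>x\<in>B. j x * n x)"

definition Jstar :: "('h \<Rightarrow> 'h) \<Rightarrow> ('h \<Rightarrow> 'f) \<Rightarrow> ('h \<Rightarrow> 'f)" where
  "Jstar star j = (\<lambda>w. j (star w))"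

end

theory Submission
  imports Defs
begin

text \<open>Reducing the Schur orthogonality relations of H modulo the maximal ideal gives, for the
  matrices c^lam(x) = v^a_lam rho_lam(x) mod m (integral on basis elements by balancedness),
    sum_b c^lam(b*)_ij c^mu(b)_kl = [lam = mu, j = k, i = l] f_lam   and
    sum_lam f_lam^-1 tr(c^lam(x) c^lam(y*)) = [x = y].
  The first makes t_x |-> (c^lam(x))_lam multiplicative from J to the product of the matrix algebras
  M_d_lam(F), the second makes it injective. Hence J is a subalgebra of a product of matrix algebras:
  it is associative, the preimage of the identity is its unit, and tau-bar is the pull-back of the
  symmetric form sum_lam f_lam^-1 tr.

  For the involution, gamma_x,y,z and n_x are residues of tau-values of products with the central
  elements sum_lam v^(+-a_lam) e_lam, e_lam the block idempotents. These are fixed by *: the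
  self-adjoint Casimir element sum_b b b* acts on block lam by d_lam c_lam, so * only links blocks
  with the same d_lam c_lam, hence (the residue field having characteristic 0) with the same a_lam;
  and tau is *-invariant.\<close>

lemma add_self_inj:
  fixes x y :: "'a::linordered_ab_group_add"
  shows "x + x = y + y \<Longrightarrow> x = y"
  by (metis add_strict_mono less_irrefl linorder_neqE)

lemma sum_if_zero_const: "(\<Sum>x\<in>A. if P then f x else 0) = (if P then sum f A else 0)"
  by simp

lemma mult_delta_left: "(if P then x else 0) * y = (if P then x * y else (0::'a::mult_zero))"
  and mult_delta_right: "x * (if P then y else 0) = (if P then x * y else (0::'a::mult_zero))"
  by simp_all

lemma formally_real_of_nat_neq_0:
  assumes "formally_real TYPE('f::field)"
  shows "(of_nat (Suc n) :: 'f) \<noteq> 0"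
proof
  assume "(of_nat (Suc n) :: 'f) = 0"
  then have "(of_nat n :: 'f) = - 1" by (simp add: eq_neg_iff_add_eq_0 add.commute)
  moreover have "sum_list (map (\<lambda>x. x ^ 2) (replicate n (1::'f))) = of_nat n"
    by (induct n) auto
  ultimately show False using assms unfolding formally_real_def by metis
qed

locale residue_valuation =
  fixes \<nu> :: "'k::field \<Rightarrow> 'g::linordered_ab_group_add"
    and red :: "'k \<Rightarrow> 'f::field"
  assumes val: "surj_valuation \<nu>"
    and res: "residue_map \<nu> red"
    and freal: "formally_real TYPE('f)"
begin

abbreviation "\<O> \<equiv> val_ring \<nu>"

lemma val_mult: "x \<noteq> 0 \<Longrightarrow> y \<noteq> 0 \<Longrightarrow> \<nu> (x * y) = \<nu> x + \<nu> y"
  using val unfolding surj_valuation_def by blast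

lemma val_add: "x \<noteq> 0 \<Longrightarrow> y \<noteq> 0 \<Longrightarrow> x + y \<noteq> 0 \<Longrightarrow> min (\<nu> x) (\<nu> y) \<le> \<nu> (x + y)"
  using val unfolding surj_valuation_def by blast

lemma val_one: "\<nu> 1 = 0"
  using val_mult[of 1 1] by simp

lemma val_inverse: "x \<noteq> 0 \<Longrightarrow> \<nu> (inverse x) = - \<nu> x"
  using val_mult[of x "inverse x"] val_one by (simp add: eq_neg_iff_add_eq_0 add.commute)

lemma val_ring_iff: "x \<in> \<O> \<longleftrightarrow> x = 0 \<or> 0 \<le> \<nu> x"
  unfolding val_ring_def val_ge_def by simp

lemma val_ring_0 [simp]: "0 \<in> \<O>"
  by (simp add: val_ring_iff)

lemma val_ring_1 [simp]: "1 \<in> \<O>"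
  by (simp add: val_ring_iff val_one)

lemma val_ring_mult [simp]: "x \<in> \<O> \<Longrightarrow> y \<in> \<O> \<Longrightarrow> x * y \<in> \<O>"
  unfolding val_ring_iff by (cases "x = 0 \<or> y = 0") (auto simp: val_mult)

lemma val_ring_add [simp]:
  assumes "x \<in> \<O>" "y \<in> \<O>" shows "x + y \<in> \<O>"
proof (cases "x = 0 \<or> y = 0 \<or> x + y = 0")
  case False
  then have "min (\<nu> x) (\<nu> y) \<le> \<nu> (x + y)" by (simp add: val_add)
  with False assms show ?thesis by (auto simp: val_ring_iff intro: order.trans[OF min.boundedI])
qed (use assms in auto)

lemma val_ring_sum [simp]: "\<forall>x\<in>A. f x \<in> \<O> \<Longrightarrow> sum f A \<in> \<O>"
  by (induct A rule: infinite_finite_induct) auto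

lemma red_add: "x \<in> \<O> \<Longrightarrow> y \<in> \<O> \<Longrightarrow> red (x + y) = red x + red y"
  using res unfolding residue_map_def by blast

lemma red_mult: "x \<in> \<O> \<Longrightarrow> y \<in> \<O> \<Longrightarrow> red (x * y) = red x * red y"
  using res unfolding residue_map_def by blast

lemma red_1 [simp]: "red 1 = 1"
  using res unfolding residue_map_def by blast

lemma red_0 [simp]: "red 0 = 0"
  using red_add[of 0 0] by (metis add_cancel_right_right val_ring_0)

lemma red_eq_0_iff: "x \<in> \<O> \<Longrightarrow> red x = 0 \<longleftrightarrow> x = 0 \<or> 0 < \<nu> x"
  using res unfolding residue_map_def val_max_def by blast

lemma red_sum: "\<forall>x\<in>A. f x \<in> \<O> \<Longrightarrow> red (sum f A) = (\<Sum>x\<in>A. red (f x))"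
  by (induct A rule: infinite_finite_induct) (simp_all add: red_add)

lemma
  assumes "x \<noteq> 0" "\<nu> x = 0"
  shows val_unit_in_ring: "x \<in> \<O>" "inverse x \<in> \<O>"
    and red_val_unit_neq_0: "red x \<noteq> 0"
    and red_inverse_val_unit: "red (inverse x) = inverse (red x)"
proof -
  show x: "x \<in> \<O>" and ix: "inverse x \<in> \<O>"
    using assms by (simp_all add: val_ring_iff val_inverse)
  show rx: "red x \<noteq> 0" using red_eq_0_iff[OF x] assms by simp
  have "red x * red (inverse x) = 1"
    using red_mult[OF x ix, symmetric] assms by simp
  then show "red (inverse x) = inverse (red x)" using rx by (simp add: field_simps)
qed

lemma red_of_nat: "red (of_nat n) = of_nat n"
proof (induct n)
  case (Suc n)
  have "of_nat n \<in> \<O>" by (induct n) simp_all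
  with Suc show ?case by (simp add: red_add)
qed simp

text \<open>Formal reality makes the residue field of characteristic zero, so positive integers are
  valuation units.\<close>
lemma val_of_nat:
  assumes "0 < n" shows "(of_nat n :: 'k) \<noteq> 0" "\<nu> (of_nat n :: 'k) = 0"
proof -
  have "(of_nat n :: 'k) \<in> \<O>" by (induct n) simp_all
  moreover have "red (of_nat n :: 'k) \<noteq> 0"
    using assms red_of_nat[of n] formally_real_of_nat_neq_0[OF freal] gr0_conv_Suc by metis
  ultimately show "(of_nat n :: 'k) \<noteq> 0" "\<nu> (of_nat n :: 'k) = 0"
    using red_eq_0_iff by (fastforce simp: val_ring_iff)+
qed

end

locale star_symmetric_algebra =
  fixes scale :: "'k::field \<Rightarrow> 'h::ring_1 \<Rightarrow> 'h"
    and \<tau> :: "'h \<Rightarrow> 'k"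
    and star :: "'h \<Rightarrow> 'h"
    and B :: "'h set"
  assumes alg: "K_algebra scale"
    and trace: "symmetrizing_trace scale \<tau>"
    and inv: "involutive_antiauto scale star"
    and Bsym: "star_sym_basis scale \<tau> star B"
begin

sublocale module scale
  using alg unfolding K_algebra_def by (simp add: module_iff_vector_space)

lemma scale_mult_left: "scale k (x * y) = scale k x * y"
  using alg unfolding K_algebra_def by blast

lemma star_add: "star (x + y) = star x + star y"
  and star_scale: "star (scale k x) = scale k (star x)"
  and star_mult: "star (x * y) = star y * star x"
  and star_star [simp]: "star (star x) = x"
  using inv unfolding involutive_antiauto_def by blast+

lemma star_eq_iff: "star x = y \<longleftrightarrow> x = star y"
  by (metis star_star)

lemma star_0 [simp]: "star 0 = 0"
  using star_add[of 0 0] by simp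

lemma star_1 [simp]: "star 1 = 1"
  by (metis mult_1_left mult_1_right star_mult star_star)

lemma star_sum: "star (sum f A) = (\<Sum>x\<in>A. star (f x))"
  by (induct A rule: infinite_finite_induct) (simp_all add: star_add)

lemma trace_add: "\<tau> (x + y) = \<tau> x + \<tau> y"
  and trace_scale: "\<tau> (scale k x) = k * \<tau> x"
  and trace_commute: "\<tau> (x * y) = \<tau> (y * x)"
  using trace unfolding symmetrizing_trace_def by blast+

lemma trace_0 [simp]: "\<tau> 0 = 0"
  using trace_scale[of 0 0] by simp

lemma trace_sum: "\<tau> (sum f A) = (\<Sum>x\<in>A. \<tau> (f x))"
  by (induct A rule: infinite_finite_induct) (simp_all add: trace_add)

lemma finite_basis: "finite B"
  and star_basis: "star ` B = B"
  and trace_basis_dual: "b \<in> B \<Longrightarrow> b' \<in> B \<Longrightarrow> \<tau> (b * star b') = (if b = b' then 1 else 0)"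
  using Bsym unfolding star_sym_basis_def is_basis_def by blast+

lemma star_in_basis: "b \<in> B \<Longrightarrow> star b \<in> B"
  using star_basis by blast

lemma star_in_basis_iff: "star b \<in> B \<longleftrightarrow> b \<in> B"
  using star_in_basis by force

lemma sum_basis_star: "(\<Sum>b\<in>B. f (star b)) = (\<Sum>b\<in>B. f b)"
  by (rule sum.reindex_bij_witness[of _ star star]) (auto simp: star_in_basis)

lemma dual_basis_expansion: "h = (\<Sum>b\<in>B. scale (\<tau> (h * star b)) b)"
proof -
  have "h \<in> span B"
    using Bsym unfolding star_sym_basis_def is_basis_def by blast
  then obtain u where u: "h = (\<Sum>v\<in>B. scale (u v) v)"
    using span_finite[OF finite_basis] by auto
  have "\<tau> (h * star b) = u b" if "b \<in> B" for b
  proof -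
    have "\<tau> (h * star b) = (\<Sum>v\<in>B. u v * \<tau> (v * star b))"
      unfolding u by (simp add: sum_distrib_right trace_sum flip: scale_mult_left trace_scale)
    also have "\<dots> = u b"
      using that finite_basis by (simp add: trace_basis_dual if_distrib cong: if_cong)
    finally show ?thesis .
  qed
  then show ?thesis by (subst u) (auto intro: sum.cong)
qed

lemma trace_star: "\<tau> (star h) = \<tau> h"
proof -
  have trace_star_basis: "\<tau> (star b) = \<tau> b" if "b \<in> B" for b
  proof -
    have "\<tau> (star b) = \<tau> (star 1 * star b)" by simp
    also have "\<dots> = (\<Sum>b'\<in>B. \<tau> (star b') * \<tau> (star b' * star b))"
      by (subst dual_basis_expansion[of 1])
        (simp add: star_sum star_scale sum_distrib_right trace_sum trace_scale flip: scale_mult_left)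
    also have "\<dots> = (\<Sum>b'\<in>B. \<tau> b' * \<tau> (b' * star b))"
      by (rule sum_basis_star[where f = "\<lambda>x. \<tau> x * \<tau> (x * star b)"])
    also have "\<dots> = \<tau> b"
      using that finite_basis by (simp add: trace_basis_dual if_distrib cong: if_cong)
    finally show ?thesis .
  qed
  have "\<tau> (star h) = (\<Sum>b\<in>B. \<tau> (h * star b) * \<tau> (star b))"
    by (subst dual_basis_expansion[of h]) (simp add: star_sum star_scale trace_sum trace_scale)
  also have "\<dots> = (\<Sum>b\<in>B. \<tau> (h * star b) * \<tau> b)"
    by (rule sum.cong) (auto simp: trace_star_basis)
  also have "\<dots> = \<tau> h"
    by (subst (2) dual_basis_expansion[of h]) (simp add: trace_sum trace_scale)
  finally show ?thesis .
qed

end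

locale split_star_symmetric_algebra = star_symmetric_algebra scale \<tau> star B
  for scale :: "'k::field \<Rightarrow> 'h::ring_1 \<Rightarrow> 'h" and \<tau> star B +
  fixes \<Lambda> :: "'l set"
    and d :: "'l \<Rightarrow> nat"
    and \<rho> :: "'l \<Rightarrow> 'h \<Rightarrow> nat \<Rightarrow> nat \<Rightarrow> 'k"
    and c :: "'l \<Rightarrow> 'k"
  assumes wed: "wedderburn scale \<Lambda> d \<rho>"
    and schur_nz: "\<forall>lam\<in>\<Lambda>. c lam \<noteq> 0"
    and schur: "\<forall>h. \<tau> h = (\<Sum>lam\<in>\<Lambda>. inverse (c lam) * character (d lam) (\<rho> lam) h)"
begin

lemma finite_blocks: "finite \<Lambda>"
  and block_dim_pos: "lam \<in> \<Lambda> \<Longrightarrow> 0 < d lam"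
  and matrix_rep_block: "lam \<in> \<Lambda> \<Longrightarrow> matrix_rep scale (d lam) (\<rho> lam)"
  and rep_eqI: "(\<And>lam i j. lam \<in> \<Lambda> \<Longrightarrow> i < d lam \<Longrightarrow> j < d lam \<Longrightarrow> \<rho> lam x i j = \<rho> lam y i j)
      \<Longrightarrow> x = y"
  using wed unfolding wedderburn_def by blast+

lemma schur_element_neq_0: "lam \<in> \<Lambda> \<Longrightarrow> c lam \<noteq> 0"
  using schur_nz by blast

lemma trace_blocks: "\<tau> h = (\<Sum>lam\<in>\<Lambda>. inverse (c lam) * (\<Sum>i<d lam. \<rho> lam h i i))"
  using schur unfolding character_def by blast

context
  fixes lam i j
  assumes ij: "lam \<in> \<Lambda>" "i < d lam" "j < d lam"
begin

lemma rep_add: "\<rho> lam (x + y) i j = \<rho> lam x i j + \<rho> lam y i j"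
  and rep_scale: "\<rho> lam (scale k x) i j = k * \<rho> lam x i j"
  and rep_mult: "\<rho> lam (x * y) i j = (\<Sum>k<d lam. \<rho> lam x i k * \<rho> lam y k j)"
  and rep_1: "\<rho> lam 1 i j = (if i = j then 1 else 0)"
  using matrix_rep_block[OF ij(1)] ij(2,3) unfolding matrix_rep_def by blast+

lemma rep_0: "\<rho> lam 0 i j = 0"
  using rep_scale[of 0 0] by simp

lemma rep_sum: "\<rho> lam (sum f A) i j = (\<Sum>x\<in>A. \<rho> lam (f x) i j)"
  by (induct A rule: infinite_finite_induct) (simp_all add: rep_add rep_0)

end

definition rep_inv :: "('l \<Rightarrow> nat \<Rightarrow> nat \<Rightarrow> 'k) \<Rightarrow> 'h" where
  "rep_inv M = (SOME x. \<forall>lam\<in>\<Lambda>. \<forall>i<d lam. \<forall>j<d lam. \<rho> lam x i j = M lam i j)"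

lemma rep_rep_inv: "lam \<in> \<Lambda> \<Longrightarrow> i < d lam \<Longrightarrow> j < d lam \<Longrightarrow> \<rho> lam (rep_inv M) i j = M lam i j"
proof -
  have "\<exists>x. \<forall>lam\<in>\<Lambda>. \<forall>i<d lam. \<forall>j<d lam. \<rho> lam x i j = M lam i j"
    using wed unfolding wedderburn_def by blast
  then have "\<forall>lam\<in>\<Lambda>. \<forall>i<d lam. \<forall>j<d lam. \<rho> lam (rep_inv M) i j = M lam i j"
    unfolding rep_inv_def by (rule someI_ex)
  then show "lam \<in> \<Lambda> \<Longrightarrow> i < d lam \<Longrightarrow> j < d lam \<Longrightarrow> \<rho> lam (rep_inv M) i j = M lam i j"
    by blast
qed

text \<open>Expand the matrix unit E_ji of block lam in the dual basis.\<close>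
lemma schur_orthogonality:
  assumes lam: "lam \<in> \<Lambda>" "i < d lam" "j < d lam" and mu: "mu \<in> \<Lambda>" "k < d mu" "l < d mu"
  shows "(\<Sum>b\<in>B. \<rho> lam (star b) i j * \<rho> mu b k l)
    = (if lam = mu \<and> j = k \<and> i = l then c lam else 0)"
proof -
  define e where "e = rep_inv (\<lambda>kap s t. if kap = lam \<and> t = i \<and> s = j then 1 else 0)"
  have rep_e: "\<rho> kap e s t = (if kap = lam \<and> t = i \<and> s = j then 1 else 0)"
    if "kap \<in> \<Lambda>" "s < d kap" "t < d kap" for kap s t
    using rep_rep_inv[OF that] unfolding e_def by simp
  have trace_e: "\<tau> (e * star b) = inverse (c lam) * \<rho> lam (star b) i j" for b
  proof -
    have "\<tau> (e * star b) = (\<Sum>kap\<in>\<Lambda>. inverse (c kap) *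
        (\<Sum>s<d kap. \<Sum>t<d kap. \<rho> kap e s t * \<rho> kap (star b) t s))"
      unfolding trace_blocks by (intro sum.cong) (simp_all add: rep_mult)
    also have "\<dots> = (\<Sum>kap\<in>\<Lambda>. if kap = lam then inverse (c lam) * \<rho> lam (star b) i j else 0)"
      by (intro sum.cong) (simp_all add: rep_e lam mult_delta_left if_if_eq_conj[symmetric] sum.delta')
    finally show ?thesis
      using lam finite_blocks by simp
  qed
  have "\<rho> mu e k l = (\<Sum>b\<in>B. \<tau> (e * star b) * \<rho> mu b k l)"
    by (subst dual_basis_expansion[of e]) (simp add: rep_sum rep_scale mu)
  then have "(if mu = lam \<and> l = i \<and> k = j then 1 else 0)
      = inverse (c lam) * (\<Sum>b\<in>B. \<rho> lam (star b) i j * \<rho> mu b k l)"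
    by (simp add: rep_e mu trace_e sum_distrib_left mult.assoc)
  then show ?thesis
    using schur_element_neq_0[OF lam(1)] by (auto simp: field_simps split: if_splits)
qed

definition casimir :: 'h where
  "casimir = (\<Sum>b\<in>B. b * star b)"

lemma rep_casimir:
  assumes "lam \<in> \<Lambda>" "i < d lam" "l < d lam"
  shows "\<rho> lam casimir i l = (if i = l then of_nat (d lam) * c lam else 0)"
proof -
  have "\<rho> lam casimir i l = (\<Sum>b\<in>B. \<Sum>k<d lam. \<rho> lam b i k * \<rho> lam (star b) k l)"
    unfolding casimir_def using assms by (simp add: rep_sum rep_mult)
  also have "\<dots> = (\<Sum>k<d lam. \<Sum>b\<in>B. \<rho> lam (star b) i k * \<rho> lam b k l)"
    by (subst sum_basis_star[symmetric]) (simp add: sum.swap[where A = B])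
  also have "\<dots> = (\<Sum>k<d lam. if i = l then c lam else 0)"
    using assms by (intro sum.cong) (auto simp: schur_orthogonality)
  finally show ?thesis by simp
qed

lemma star_casimir: "star casimir = casimir"
  unfolding casimir_def by (simp add: star_sum star_mult)

definition block_idem :: "'l \<Rightarrow> 'h" where
  "block_idem lam = rep_inv (\<lambda>kap s t. if kap = lam \<and> s = t then 1 else 0)"

lemma rep_block_idem:
  "kap \<in> \<Lambda> \<Longrightarrow> s < d kap \<Longrightarrow> t < d kap \<Longrightarrow> \<rho> kap (block_idem lam) s t = (if kap = lam \<and> s = t then 1 else 0)"
  unfolding block_idem_def by (simp add: rep_rep_inv)

lemma sum_block_idem: "(\<Sum>lam\<in>\<Lambda>. block_idem lam) = 1"
  by (rule rep_eqI) (simp add: rep_sum rep_block_idem rep_1 finite_blocks)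

lemma casimir_mult_block_idem:
  assumes "lam \<in> \<Lambda>"
  shows "casimir * block_idem lam = scale (of_nat (d lam) * c lam) (block_idem lam)"
  using assms by (intro rep_eqI) (simp add: rep_mult rep_scale rep_casimir rep_block_idem
      mult_delta_left if_if_eq_conj[symmetric] sum.delta cong: if_cong)

text \<open>Apply the involution to casimir_mult_block_idem: the Casimir element is self-adjoint.\<close>
lemma rep_star_block_idem_neq_0D:
  assumes "lam \<in> \<Lambda>" "mu \<in> \<Lambda>" "i < d mu" "j < d mu" and "\<rho> mu (star (block_idem lam)) i j \<noteq> 0"
  shows "of_nat (d lam) * c lam = of_nat (d mu) * c mu"
proof -
  have "star (block_idem lam) * casimir = scale (of_nat (d lam) * c lam) (star (block_idem lam))"
    using arg_cong[OF casimir_mult_block_idem[OF assms(1)], of star]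
    by (simp add: star_mult star_casimir star_scale)
  then have "\<rho> mu (star (block_idem lam) * casimir) i j
      = \<rho> mu (scale (of_nat (d lam) * c lam) (star (block_idem lam))) i j"
    by simp
  then have "\<rho> mu (star (block_idem lam)) i j * (of_nat (d mu) * c mu)
      = (of_nat (d lam) * c lam) * \<rho> mu (star (block_idem lam)) i j"
    using assms(2-4) by (simp add: rep_mult rep_scale rep_casimir mult_delta_right sum.delta' cong: if_cong)
  then show ?thesis
    using assms(5) by (simp add: mult.commute)
qed

definition block_scalar :: "('l \<Rightarrow> 'k) \<Rightarrow> 'h" where
  "block_scalar g = (\<Sum>lam\<in>\<Lambda>. scale (g lam) (block_idem lam))"

lemma rep_block_scalar:
  "mu \<in> \<Lambda> \<Longrightarrow> i < d mu \<Longrightarrow> j < d mu \<Longrightarrow> \<rho> mu (block_scalar g) i j = (if i = j then g mu else 0)"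
  unfolding block_scalar_def
  by (simp add: rep_sum rep_scale rep_block_idem finite_blocks if_distrib cong: if_cong)

lemma
  assumes "mu \<in> \<Lambda>" "i < d mu" "j < d mu"
  shows rep_block_scalar_mult: "\<rho> mu (block_scalar g * h) i j = g mu * \<rho> mu h i j"
    and rep_mult_block_scalar: "\<rho> mu (h * block_scalar g) i j = \<rho> mu h i j * g mu"
  using assms by (simp_all add: rep_mult rep_block_scalar mult_delta_left mult_delta_right sum.delta sum.delta'
      cong: if_cong)

lemma block_scalar_commute: "block_scalar g * h = h * block_scalar g"
  by (rule rep_eqI) (simp add: rep_block_scalar_mult rep_mult_block_scalar mult.commute)

lemma star_block_scalar:
  assumes g: "\<And>lam mu. lam \<in> \<Lambda> \<Longrightarrow> mu \<in> \<Lambda> \<Longrightarrow>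
      of_nat (d lam) * c lam = of_nat (d mu) * c mu \<Longrightarrow> g lam = g mu"
  shows "star (block_scalar g) = block_scalar g"
proof (rule rep_eqI)
  fix mu i j assume mu: "mu \<in> \<Lambda>" "i < d mu" "j < d mu"
  have "\<rho> mu (star (block_scalar g)) i j = (\<Sum>lam\<in>\<Lambda>. g lam * \<rho> mu (star (block_idem lam)) i j)"
    unfolding block_scalar_def using mu by (simp add: star_sum star_scale rep_sum rep_scale)
  also have "\<dots> = (\<Sum>lam\<in>\<Lambda>. g mu * \<rho> mu (star (block_idem lam)) i j)"
    using rep_star_block_idem_neq_0D[OF _ mu] g[OF _ mu(1)] by (intro sum.cong) fastforce+
  also have "\<dots> = g mu * \<rho> mu (star (\<Sum>lam\<in>\<Lambda>. block_idem lam)) i j"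
    using mu by (simp add: star_sum rep_sum sum_distrib_left)
  also have "\<dots> = \<rho> mu (block_scalar g) i j"
    using mu by (simp add: sum_block_idem rep_1 rep_block_scalar)
  finally show "\<rho> mu (star (block_scalar g)) i j = \<rho> mu (block_scalar g) i j" .
qed

lemma trace_block_scalar_mult:
  "\<tau> (block_scalar g * h) = (\<Sum>lam\<in>\<Lambda>. inverse (c lam) * g lam * (\<Sum>i<d lam. \<rho> lam h i i))"
  unfolding trace_blocks by (intro sum.cong) (simp_all add: rep_block_scalar_mult sum_distrib_left mult.assoc)

end

locale balanced_representations =
  residue_valuation \<nu> red + split_star_symmetric_algebra scale \<tau> star B \<Lambda> d \<rho> c
  for \<nu> :: "'k::field \<Rightarrow> 'g::linordered_ab_group_add"
    and red :: "'k \<Rightarrow> 'f::field"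
    and scale :: "'k \<Rightarrow> 'h::ring_1 \<Rightarrow> 'h"
    and \<tau> star B
    and \<Lambda> :: "'l set"
    and d \<rho> c +
  fixes a :: "'l \<Rightarrow> 'g"
    and vp :: "'g \<Rightarrow> 'k"
  assumes a_def: "\<forall>lam\<in>\<Lambda>. a lam + a lam = - \<nu> (c lam)"
    and vp_hom: "vpow_hom \<nu> (gen_subgroup (a ` \<Lambda>)) vp"
    and bal: "\<forall>lam\<in>\<Lambda>. balanced scale \<tau> star \<nu> (a lam) (d lam) (\<rho> lam)"
begin

abbreviation "C \<equiv> cmat red vp a \<rho>"
abbreviation "fbar \<equiv> fres red vp a c"
abbreviation "\<gamma> \<equiv> gam \<Lambda> d red vp a c \<rho>"
abbreviation "n \<equiv> nconst \<Lambda> d red vp a c \<rho> star"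

definition nrep :: "'l \<Rightarrow> 'h \<Rightarrow> nat \<Rightarrow> nat \<Rightarrow> 'k" where
  "nrep lam x i j = vp (a lam) * \<rho> lam x i j"

definition f :: "'l \<Rightarrow> 'k" where
  "f lam = vp (a lam + a lam) * c lam"

lemma cmat_eq_red_nrep: "C lam x i j = red (nrep lam x i j)"
  unfolding cmat_def nrep_def ..

lemma fres_eq_red_f: "fbar lam = red (f lam)"
  unfolding fres_def f_def ..

lemma
  assumes "lam \<in> \<Lambda>"
  shows vp_a_neq_0: "vp (a lam) \<noteq> 0"
    and val_vp_a: "\<nu> (vp (a lam)) = a lam"
    and vp_double_a: "vp (a lam + a lam) = vp (a lam) * vp (a lam)"
proof -
  have "a lam \<in> gen_subgroup (a ` \<Lambda>)"
    using assms by (simp add: gen_subgroup.gen)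
  then show "vp (a lam) \<noteq> 0" "\<nu> (vp (a lam)) = a lam" "vp (a lam + a lam) = vp (a lam) * vp (a lam)"
    using vp_hom gen_subgroup.add unfolding vpow_hom_def by blast+
qed

lemma f_eq: "lam \<in> \<Lambda> \<Longrightarrow> f lam = vp (a lam) * vp (a lam) * c lam"
  by (simp add: f_def vp_double_a)

lemma
  assumes "lam \<in> \<Lambda>"
  shows f_neq_0: "f lam \<noteq> 0"
    and val_f: "\<nu> (f lam) = 0"
proof -
  show "f lam \<noteq> 0"
    using assms by (simp add: f_eq vp_a_neq_0 schur_element_neq_0)
  then show "\<nu> (f lam) = 0"
    using assms a_def by (simp add: f_eq vp_a_neq_0 schur_element_neq_0 val_mult val_vp_a)
qed

lemma inverse_schur_element:
  "lam \<in> \<Lambda> \<Longrightarrow> inverse (c lam) = inverse (f lam) * (vp (a lam) * vp (a lam))"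
  using vp_a_neq_0 schur_element_neq_0 by (simp add: f_eq field_simps)

lemma nrep_in_val_ring [simp]:
  assumes "lam \<in> \<Lambda>" "b \<in> B" "i < d lam" "j < d lam"
  shows "nrep lam b i j \<in> \<O>"
proof -
  have "val_ge \<nu> (- a lam) (\<rho> lam b i j)"
    using bal assms Bsym unfolding balanced_def by blast
  then have "\<rho> lam b i j \<noteq> 0 \<Longrightarrow> 0 \<le> \<nu> (vp (a lam) * \<rho> lam b i j)"
    using assms(1) by (auto simp: val_ge_def val_mult vp_a_neq_0 val_vp_a dest: add_left_mono[where c = "a lam"])
  then show ?thesis
    unfolding nrep_def val_ring_iff by auto
qed

lemma red_sum_inverse_f:
  assumes "\<forall>lam\<in>\<Lambda>. T lam \<in> \<O>"
  shows "red (\<Sum>lam\<in>\<Lambda>. inverse (f lam) * T lam) = (\<Sum>lam\<in>\<Lambda>. inverse (fbar lam) * red (T lam))"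
  using assms f_neq_0 val_f
  by (subst red_sum) (simp_all add: val_unit_in_ring red_mult red_inverse_val_unit fres_eq_red_f)

lemma a_eq_if_casimir_scalars_eq:
  assumes "lam \<in> \<Lambda>" "mu \<in> \<Lambda>" "of_nat (d lam) * c lam = of_nat (d mu) * c mu"
  shows "a lam = a mu"
proof -
  have val: "\<nu> (of_nat (d kap) * c kap) = \<nu> (c kap)" if "kap \<in> \<Lambda>" for kap
    using that block_dim_pos[OF that] val_of_nat[of "d kap"] schur_element_neq_0
    by (simp add: val_mult)
  have "a lam + a lam = a mu + a mu"
    using assms(3) val[OF assms(1)] val[OF assms(2)] a_def assms(1,2) by simp
  then show ?thesis by (rule add_self_inj)
qed

lemma star_block_scalar_vp: "star (block_scalar (\<lambda>lam. vp (a lam))) = block_scalar (\<lambda>lam. vp (a lam))"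
  and star_block_scalar_inverse_vp:
    "star (block_scalar (\<lambda>lam. inverse (vp (a lam)))) = block_scalar (\<lambda>lam. inverse (vp (a lam)))"
  by (rule star_block_scalar, metis a_eq_if_casimir_scalars_eq)+

lemma red_schur_orthogonality:
  assumes lam: "lam \<in> \<Lambda>" "i < d lam" "j < d lam" and mu: "mu \<in> \<Lambda>" "k < d mu" "l < d mu"
  shows "(\<Sum>b\<in>B. C lam (star b) i j * C mu b k l) = (if lam = mu \<and> j = k \<and> i = l then fbar lam else 0)"
proof -
  have "(\<Sum>b\<in>B. C lam (star b) i j * C mu b k l) = red (\<Sum>b\<in>B. nrep lam (star b) i j * nrep mu b k l)"
    using assms by (simp add: cmat_eq_red_nrep red_sum red_mult star_in_basis)
  also have "(\<Sum>b\<in>B. nrep lam (star b) i j * nrep mu b k l)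
      = vp (a lam) * vp (a mu) * (\<Sum>b\<in>B. \<rho> lam (star b) i j * \<rho> mu b k l)"
    by (simp add: nrep_def sum_distrib_left ac_simps)
  finally show ?thesis
    using assms by (auto simp: schur_orthogonality fres_eq_red_f f_eq)
qed

lemma red_trace_mult_star:
  assumes "x \<in> B" "y \<in> B"
  shows "red (\<tau> (x * star y))
    = (\<Sum>lam\<in>\<Lambda>. inverse (fbar lam) * (\<Sum>k<d lam. \<Sum>l<d lam. C lam x k l * C lam (star y) l k))"
proof -
  have "\<tau> (x * star y) = (\<Sum>lam\<in>\<Lambda>. inverse (f lam) *
      (\<Sum>k<d lam. \<Sum>l<d lam. nrep lam x k l * nrep lam (star y) l k))"
    unfolding trace_blocks
    by (intro sum.cong) (simp_all add: inverse_schur_element rep_mult nrep_def sum_distrib_left mult_ac)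
  then have "red (\<tau> (x * star y)) = (\<Sum>lam\<in>\<Lambda>. inverse (fbar lam) *
      red (\<Sum>k<d lam. \<Sum>l<d lam. nrep lam x k l * nrep lam (star y) l k))"
    using assms by (simp add: red_sum_inverse_f star_in_basis)
  then show ?thesis
    using assms by (simp add: red_sum red_mult star_in_basis cmat_eq_red_nrep)
qed

lemma gam_eq_red_trace:
  assumes "x \<in> B" "y \<in> B" "z \<in> B"
  shows "\<gamma> x y z = red (\<tau> (block_scalar (\<lambda>lam. vp (a lam)) * (x * (y * z))))"
proof -
  have "\<tau> (block_scalar (\<lambda>lam. vp (a lam)) * (x * (y * z))) = (\<Sum>lam\<in>\<Lambda>. inverse (f lam) *
      (\<Sum>s<d lam. \<Sum>t<d lam. \<Sum>u<d lam. nrep lam x s t * nrep lam y t u * nrep lam z u s))"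
    unfolding trace_block_scalar_mult
    by (intro sum.cong) (simp_all add: inverse_schur_element rep_mult nrep_def sum_distrib_left mult_ac)
  then have "red (\<tau> (block_scalar (\<lambda>lam. vp (a lam)) * (x * (y * z)))) = (\<Sum>lam\<in>\<Lambda>. inverse (fbar lam) *
      red (\<Sum>s<d lam. \<Sum>t<d lam. \<Sum>u<d lam. nrep lam x s t * nrep lam y t u * nrep lam z u s))"
    using assms by (simp add: red_sum_inverse_f)
  then show ?thesis
    using assms unfolding gam_def
    by (simp add: red_sum red_mult cmat_eq_red_nrep sum_distrib_left mult.assoc)
qed

lemma nconst_eq_red_trace:
  assumes "x \<in> B"
  shows "n x = red (\<tau> (block_scalar (\<lambda>lam. inverse (vp (a lam))) * star x))"
proof -
  have "inverse (c lam) * inverse (vp (a lam)) = inverse (f lam) * vp (a lam)" if "lam \<in> \<Lambda>" for lam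
    using that vp_a_neq_0 by (simp add: inverse_schur_element)
  then have "\<tau> (block_scalar (\<lambda>lam. inverse (vp (a lam))) * star x)
      = (\<Sum>lam\<in>\<Lambda>. inverse (f lam) * (\<Sum>s<d lam. nrep lam (star x) s s))"
    unfolding trace_block_scalar_mult by (intro sum.cong) (simp_all add: nrep_def sum_distrib_left mult.assoc)
  then have "red (\<tau> (block_scalar (\<lambda>lam. inverse (vp (a lam))) * star x))
      = (\<Sum>lam\<in>\<Lambda>. inverse (fbar lam) * red (\<Sum>s<d lam. nrep lam (star x) s s))"
    using assms by (simp add: red_sum_inverse_f star_in_basis)
  then show ?thesis
    using assms unfolding nconst_def
    by (simp add: red_sum star_in_basis cmat_eq_red_nrep sum_distrib_left)
qed

lemma nconst_star:
  assumes "x \<in> B" shows "n (star x) = n x"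
proof -
  let ?W = "block_scalar (\<lambda>lam. inverse (vp (a lam)))"
  have "\<tau> (?W * star x) = \<tau> (star (x * ?W))"
    by (simp add: star_mult star_block_scalar_inverse_vp)
  also have "\<dots> = \<tau> (?W * star (star x))"
    by (simp add: trace_star block_scalar_commute)
  finally show ?thesis
    using assms by (simp add: nconst_eq_red_trace star_in_basis)
qed

lemma gam_star:
  assumes "x \<in> B" "y \<in> B" "z \<in> B"
  shows "\<gamma> (star y) (star x) (star z) = \<gamma> x y z"
proof -
  let ?W = "block_scalar (\<lambda>lam. vp (a lam))"
  have "\<tau> (?W * (star y * (star x * star z))) = \<tau> (star (?W * (z * (x * y))))"
    by (simp add: star_mult star_block_scalar_vp block_scalar_commute mult.assoc)
  also have "\<dots> = \<tau> (z * (?W * (x * y)))"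
    by (simp add: trace_star block_scalar_commute mult.assoc)
  also have "\<dots> = \<tau> (?W * (x * (y * z)))"
    by (simp add: trace_commute[of z] mult.assoc)
  finally show ?thesis
    using assms by (simp add: gam_eq_red_trace star_in_basis)
qed

abbreviation "JM \<equiv> Jmult B star \<gamma>"

definition Jrep :: "('h \<Rightarrow> 'f) \<Rightarrow> 'l \<Rightarrow> nat \<Rightarrow> nat \<Rightarrow> 'f" where
  "Jrep j lam k l = (\<Sum>x\<in>B. j x * C lam x k l)"

lemma Jrep_Jt: "x \<in> B \<Longrightarrow> Jrep (Jt x) lam k l = C lam x k l"
  unfolding Jrep_def Jt_def using finite_basis by (simp add: mult_delta_left)

lemma sum_gam_cmat:
  assumes lam: "lam \<in> \<Lambda>" "k < d lam" "l < d lam" and "x \<in> B" "y \<in> B"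
  shows "(\<Sum>w\<in>B. \<gamma> x y (star w) * C lam w k l) = (\<Sum>t<d lam. C lam x k t * C lam y t l)"
proof -
  have "(\<Sum>w\<in>B. \<gamma> x y (star w) * C lam w k l)
     = (\<Sum>kap\<in>\<Lambda>. \<Sum>s<d kap. \<Sum>t<d kap. \<Sum>u<d kap.
          inverse (fbar kap) * C kap x s t * C kap y t u * (\<Sum>w\<in>B. C kap (star w) u s * C lam w k l))"
    unfolding gam_def by (simp add: sum_distrib_left sum_distrib_right sum.swap[where A = B] mult_ac)
  also have "\<dots> = (\<Sum>kap\<in>\<Lambda>. \<Sum>s<d kap. \<Sum>t<d kap. \<Sum>u<d kap.
          if kap = lam \<and> s = k \<and> u = l then C kap x s t * C kap y t u else 0)"
    using lam by (intro sum.cong refl) (auto simp: red_schur_orthogonality fres_eq_red_f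
        red_val_unit_neq_0 f_neq_0 val_f)
  also have "\<dots> = (\<Sum>t<d lam. C lam x k t * C lam y t l)"
    using lam finite_blocks
    by (simp add: if_if_eq_conj[symmetric] sum_if_zero_const sum.delta sum.delta' cong: if_cong)
  finally show ?thesis .
qed

lemma Jrep_Jmult:
  assumes "lam \<in> \<Lambda>" "k < d lam" "l < d lam"
  shows "Jrep (JM j j') lam k l = (\<Sum>t<d lam. Jrep j lam k t * Jrep j' lam t l)"
proof -
  have "Jrep (JM j j') lam k l = (\<Sum>w\<in>B. \<Sum>x\<in>B. \<Sum>y\<in>B. j x * j' y * (\<gamma> x y (star w) * C lam w k l))"
    unfolding Jrep_def Jmult_def by (intro sum.cong refl) (simp add: sum_distrib_right mult.assoc)
  also have "\<dots> = (\<Sum>x\<in>B. \<Sum>y\<in>B. \<Sum>w\<in>B. j x * j' y * (\<gamma> x y (star w) * C lam w k l))"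
    by (rule trans[OF sum.swap sum.cong[OF refl sum.swap]])
  also have "\<dots> = (\<Sum>x\<in>B. \<Sum>y\<in>B. j x * j' y * (\<Sum>t<d lam. C lam x k t * C lam y t l))"
    using assms by (simp only: sum_distrib_left[symmetric]) (simp add: sum_gam_cmat)
  also have "\<dots> = (\<Sum>x\<in>B. \<Sum>y\<in>B. \<Sum>t<d lam. (j x * C lam x k t) * (j' y * C lam y t l))"
    by (simp add: sum_distrib_left mult_ac)
  also have "\<dots> = (\<Sum>t<d lam. Jrep j lam k t * Jrep j' lam t l)"
    unfolding Jrep_def sum_product by (simp only: sum.swap[of _ "{..<d lam}"])
  finally show ?thesis .
qed

lemma cmat_column_orthogonality:
  assumes "x \<in> B" "y \<in> B"
  shows "(\<Sum>lam\<in>\<Lambda>. inverse (fbar lam) * (\<Sum>k<d lam. \<Sum>l<d lam. C lam x k l * C lam (star y) l k))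
    = (if x = y then 1 else 0)"
  using red_trace_mult_star[OF assms] trace_basis_dual[OF assms] by (cases "x = y") simp_all

lemma coeff_eq_Jrep_expansion:
  assumes "y \<in> B"
  shows "j y = (\<Sum>lam\<in>\<Lambda>. inverse (fbar lam) * (\<Sum>k<d lam. \<Sum>l<d lam. Jrep j lam k l * C lam (star y) l k))"
proof -
  have "j y = (\<Sum>x\<in>B. j x * (if x = y then 1 else 0))"
    using assms finite_basis by (simp add: mult_delta_right)
  also have "\<dots> = (\<Sum>x\<in>B. \<Sum>lam\<in>\<Lambda>. \<Sum>k<d lam. \<Sum>l<d lam.
      j x * (inverse (fbar lam) * (C lam x k l * C lam (star y) l k)))"
    using assms by (simp add: cmat_column_orthogonality[symmetric] sum_distrib_left)
  also have "\<dots> = (\<Sum>lam\<in>\<Lambda>. inverse (fbar lam) * (\<Sum>k<d lam. \<Sum>l<d lam. Jrep j lam k l * C lam (star y) l k))"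
    unfolding Jrep_def
    by (simp only: sum.swap[where A = B] sum_distrib_left sum_distrib_right) (simp add: mult_ac)
  finally show ?thesis .
qed

lemma Jrep_inj:
  assumes "j \<in> Jcar B" "j' \<in> Jcar B"
    and "\<And>lam k l. lam \<in> \<Lambda> \<Longrightarrow> k < d lam \<Longrightarrow> l < d lam \<Longrightarrow> Jrep j lam k l = Jrep j' lam k l"
  shows "j = j'"
proof
  fix w
  show "j w = j' w"
  proof (cases "w \<in> B")
    case True
    then show ?thesis
      using assms(3) by (simp add: coeff_eq_Jrep_expansion[of w j] coeff_eq_Jrep_expansion[of w j'])
  next
    case False
    then show ?thesis using assms(1,2) unfolding Jcar_def by auto
  qed
qed

lemma Jtrace_eq_sum_Jrep: "Jtrace B n j = (\<Sum>lam\<in>\<Lambda>. inverse (fbar lam) * (\<Sum>s<d lam. Jrep j lam s s))"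
proof -
  have "Jtrace B n j = (\<Sum>x\<in>B. j x * n (star x))"
    unfolding Jtrace_def by (intro sum.cong) (simp_all add: nconst_star)
  also have "\<dots> = (\<Sum>x\<in>B. \<Sum>lam\<in>\<Lambda>. \<Sum>s<d lam. j x * (inverse (fbar lam) * C lam x s s))"
    unfolding nconst_def by (simp add: sum_distrib_left)
  also have "\<dots> = (\<Sum>lam\<in>\<Lambda>. inverse (fbar lam) * (\<Sum>s<d lam. Jrep j lam s s))"
    unfolding Jrep_def
    by (simp only: sum.swap[where A = B] sum_distrib_left sum_distrib_right) (simp add: mult_ac)
  finally show ?thesis .
qed

lemma Jrep_Jone:
  assumes "lam \<in> \<Lambda>" "k < d lam" "l < d lam"
  shows "Jrep (Jone B n) lam k l = (if k = l then 1 else 0)"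
proof -
  have "Jrep (Jone B n) lam k l = (\<Sum>x\<in>B. n x * C lam x k l)"
    unfolding Jrep_def Jone_def by (intro sum.cong) auto
  also have "\<dots> = (\<Sum>kap\<in>\<Lambda>. \<Sum>s<d kap. inverse (fbar kap) * (\<Sum>x\<in>B. C kap (star x) s s * C lam x k l))"
    unfolding nconst_def by (simp only: sum_distrib_left sum_distrib_right sum.swap[where A = B] mult.assoc)
  also have "\<dots> = (\<Sum>kap\<in>\<Lambda>. \<Sum>s<d kap. if kap = lam \<and> s = k \<and> s = l then 1 else 0)"
    using assms f_neq_0 val_f
    by (intro sum.cong refl) (simp add: red_schur_orthogonality fres_eq_red_f red_val_unit_neq_0)
  also have "\<dots> = (if k = l then 1 else 0)"
    using assms finite_blocks by (simp add: if_if_eq_conj[symmetric] sum_if_zero_const sum.delta cong: if_cong)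
  finally show ?thesis .
qed

lemma Jmult_in_Jcar: "JM j j' \<in> Jcar B"
  unfolding Jcar_def Jmult_def by auto

lemma Jone_in_Jcar: "Jone B n \<in> Jcar B"
  unfolding Jone_def Jcar_def by auto

lemma Jmult_assoc: "JM (JM j1 j2) j3 = JM j1 (JM j2 j3)"
proof (rule Jrep_inj[OF Jmult_in_Jcar Jmult_in_Jcar])
  fix lam k l assume lam: "lam \<in> \<Lambda>" "k < d lam" "l < d lam"
  have "Jrep (JM (JM j1 j2) j3) lam k l
      = (\<Sum>t<d lam. \<Sum>r<d lam. Jrep j1 lam k r * Jrep j2 lam r t * Jrep j3 lam t l)"
    using lam by (simp add: Jrep_Jmult sum_distrib_right)
  also have "\<dots> = Jrep (JM j1 (JM j2 j3)) lam k l"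
    using lam by (subst sum.swap) (simp add: Jrep_Jmult sum_distrib_left mult.assoc)
  finally show "Jrep (JM (JM j1 j2) j3) lam k l = Jrep (JM j1 (JM j2 j3)) lam k l" .
qed

lemma Jmult_Jone_left: "j \<in> Jcar B \<Longrightarrow> JM (Jone B n) j = j"
  by (rule Jrep_inj[OF Jmult_in_Jcar]) (simp_all add: Jrep_Jmult Jrep_Jone mult_delta_left sum.delta)

lemma Jmult_Jone_right: "j \<in> Jcar B \<Longrightarrow> JM j (Jone B n) = j"
  by (rule Jrep_inj[OF Jmult_in_Jcar]) (simp_all add: Jrep_Jmult Jrep_Jone mult_delta_right sum.delta')

lemma Jtrace_Jmult_commute: "Jtrace B n (JM j j') = Jtrace B n (JM j' j)"
proof -
  have "(\<Sum>s<d lam. Jrep (JM j j') lam s s) = (\<Sum>s<d lam. Jrep (JM j' j) lam s s)" if "lam \<in> \<Lambda>" for lam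
  proof -
    have "(\<Sum>s<d lam. Jrep (JM j j') lam s s) = (\<Sum>s<d lam. \<Sum>t<d lam. Jrep j lam s t * Jrep j' lam t s)"
      using that by (simp add: Jrep_Jmult)
    also have "\<dots> = (\<Sum>t<d lam. \<Sum>s<d lam. Jrep j' lam t s * Jrep j lam s t)"
      by (subst sum.swap) (simp add: mult.commute)
    also have "\<dots> = (\<Sum>s<d lam. Jrep (JM j' j) lam s s)"
      using that by (simp add: Jrep_Jmult)
    finally show ?thesis .
  qed
  then show ?thesis
    unfolding Jtrace_eq_sum_Jrep by simp
qed

lemma Jtrace_Jmult_Jt: "y \<in> B \<Longrightarrow>
    Jtrace B n (JM j (Jt y)) = (\<Sum>lam\<in>\<Lambda>. inverse (fbar lam) * (\<Sum>k<d lam. \<Sum>l<d lam. Jrep j lam k l * C lam y l k))"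
  unfolding Jtrace_eq_sum_Jrep by (simp add: Jrep_Jmult Jrep_Jt)

lemma Jtrace_nondegenerate:
  assumes "j \<in> Jcar B" "\<forall>j'\<in>Jcar B. Jtrace B n (JM j j') = 0"
  shows "j = (\<lambda>_. 0)"
proof
  fix y
  show "j y = 0"
  proof (cases "y \<in> B")
    case True
    then have "Jt (star y) \<in> Jcar B"
      unfolding Jt_def Jcar_def using star_in_basis by auto
    then have "Jtrace B n (JM j (Jt (star y))) = 0"
      using assms(2) by blast
    then show ?thesis
      using True by (simp add: Jtrace_Jmult_Jt star_in_basis coeff_eq_Jrep_expansion[of y j])
  next
    case False
    then show ?thesis using assms(1) unfolding Jcar_def by auto
  qed
qed

lemma Jstar_Jstar: "Jstar star (Jstar star j) = j"
  unfolding Jstar_def by simp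

lemma Jstar_in_Jcar: "j \<in> Jcar B \<Longrightarrow> Jstar star j \<in> Jcar B"
  unfolding Jstar_def Jcar_def by (simp add: star_in_basis_iff)

lemma bij_betw_Jstar: "bij_betw (Jstar star) (Jcar B) (Jcar B)"
  by (rule bij_betw_byWitness[of _ "Jstar star"]) (auto simp: Jstar_Jstar Jstar_in_Jcar)

lemma Jstar_Jt: "Jstar star (Jt y) = Jt (star y)"
  unfolding Jstar_def Jt_def by (simp add: star_eq_iff)

lemma Jstar_Jmult: "Jstar star (JM j j') = JM (Jstar star j') (Jstar star j)"
proof
  fix w
  show "Jstar star (JM j j') w = JM (Jstar star j') (Jstar star j) w"
  proof (cases "w \<in> B")
    case True
    have "JM (Jstar star j') (Jstar star j) w = (\<Sum>x\<in>B. \<Sum>y\<in>B. j' (star x) * j (star y) * \<gamma> x y (star w))"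
      using True unfolding Jmult_def Jstar_def by simp
    also have "\<dots> = (\<Sum>x\<in>B. \<Sum>y\<in>B. j' x * j y * \<gamma> (star x) (star y) (star w))"
      by (subst (1 2) sum_basis_star[symmetric]) simp
    also have "\<dots> = (\<Sum>y\<in>B. \<Sum>x\<in>B. j y * j' x * \<gamma> y x w)"
      using True by (subst sum.swap) (simp add: gam_star star_in_basis mult.commute)
    also have "\<dots> = Jstar star (JM j j') w"
      using True star_in_basis unfolding Jmult_def Jstar_def by simp
    finally show ?thesis ..
  next
    case False
    then show ?thesis unfolding Jstar_def Jmult_def by (simp add: star_in_basis_iff)
  qed
qed

lemma Jtrace_Jt_Jstar_Jt:
  assumes "x \<in> B" "y \<in> B"
  shows "Jtrace B n (JM (Jt x) (Jstar star (Jt y))) = (if x = y then 1 else 0)"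
  using assms by (simp add: Jstar_Jt Jtrace_Jmult_Jt Jrep_Jt star_in_basis cmat_column_orthogonality)

end

theorem mainTheorem8:
  fixes \<nu> :: "'k::field \<Rightarrow> 'g::linordered_ab_group_add"
    and red :: "'k \<Rightarrow> 'f::field"
    and scale :: "'k \<Rightarrow> 'h::ring_1 \<Rightarrow> 'h"
    and \<tau> :: "'h \<Rightarrow> 'k"
    and star :: "'h \<Rightarrow> 'h"
    and B :: "'h set"
    and \<Lambda> :: "'l set"
    and d :: "'l \<Rightarrow> nat"
    and \<rho> :: "'l \<Rightarrow> 'h \<Rightarrow> nat \<Rightarrow> nat \<Rightarrow> 'k"
    and c :: "'l \<Rightarrow> 'k"
    and a :: "'l \<Rightarrow> 'g"
    and vp :: "'g \<Rightarrow> 'k"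
  assumes val: "surj_valuation \<nu>"
    and res: "residue_map \<nu> red"
    and freal: "formally_real TYPE('f)"
    and alg: "K_algebra scale"
    and trace: "symmetrizing_trace scale \<tau>"
    and inv: "involutive_antiauto scale star"
    and Bsym: "star_sym_basis scale \<tau> star B"
    and wed: "wedderburn scale \<Lambda> d \<rho>"
    and schur_nz: "\<forall>lam\<in>\<Lambda>. c lam \<noteq> 0"
    and schur: "\<forall>h. \<tau> h = (\<Sum>lam\<in>\<Lambda>. inverse (c lam) * character (d lam) (\<rho> lam) h)"
    and a_def: "\<forall>lam\<in>\<Lambda>. a lam + a lam = - \<nu> (c lam)"
    and vp_hom: "vpow_hom \<nu> (gen_subgroup (a ` \<Lambda>)) vp"
    and bal: "\<forall>lam\<in>\<Lambda>. balanced scale \<tau> star \<nu> (a lam) (d lam) (\<rho> lam)"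
  defines "G \<equiv> gam \<Lambda> d red vp a c \<rho>"
    and "n \<equiv> nconst \<Lambda> d red vp a c \<rho> star"
  shows
    \<comment> \<open>(a) associative F-algebra with identity 1_J = sum_{d in D} n_d t_d\<close>
    "(\<forall>j1\<in>Jcar B. \<forall>j2\<in>Jcar B. \<forall>j3\<in>Jcar B.
        Jmult B star G (Jmult B star G j1 j2) j3 = Jmult B star G j1 (Jmult B star G j2 j3))
     \<and> Jone B n \<in> Jcar B
     \<and> (\<forall>j\<in>Jcar B. Jmult B star G (Jone B n) j = j \<and> Jmult B star G j (Jone B n) = j)
     \<comment> \<open>(b) tau-bar is a symmetrizing trace form\<close>
     \<and> (\<forall>j\<in>Jcar B. \<forall>j'\<in>Jcar B.
          Jtrace B n (Jmult B star G j j') = Jtrace B n (Jmult B star G j' j))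
     \<and> (\<forall>j\<in>Jcar B. (\<forall>j'\<in>Jcar B. Jtrace B n (Jmult B star G j j') = 0) \<longrightarrow> j = (\<lambda>_. 0))
     \<comment> \<open>(c) t_x |-> t_{x*} is an (involutive) antiautomorphism and (t_x) is *-symmetric\<close>
     \<and> bij_betw (Jstar star) (Jcar B) (Jcar B)
     \<and> (\<forall>j\<in>(Jcar B :: ('h \<Rightarrow> 'f) set). Jstar star (Jstar star j) = j)
     \<and> (\<forall>j\<in>Jcar B. \<forall>j'\<in>Jcar B.
          Jstar star (Jmult B star G j j') = Jmult B star G (Jstar star j') (Jstar star j))
     \<and> (\<forall>x\<in>B. \<forall>y\<in>B.
          Jtrace B n (Jmult B star G (Jt x) (Jstar star (Jt y))) = (if x = y then 1 else 0))"
proof -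
  interpret balanced_representations \<nu> red scale \<tau> star B \<Lambda> d \<rho> c a vp
    by unfold_locales (fact val res freal alg trace inv Bsym wed schur_nz schur a_def vp_hom bal)+
  show ?thesis
    unfolding G_def n_def
    by (auto simp: Jmult_assoc Jone_in_Jcar Jmult_Jone_left Jmult_Jone_right Jtrace_Jmult_commute
        bij_betw_Jstar Jstar_Jstar Jstar_Jmult Jtrace_Jt_Jstar_Jt intro: Jtrace_nondegenerate)
qed

end
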